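(* $\displaystyle T_2(z)=\sum_{c\ge0}T(2,c)z^c=\frac{1+2z^2-z^3}{1-2z-2z^3+z^4}.$
   Context: A tatami tiling of the $r\times c$ rectangular grid is a tiling by monomers ($1\times1$ tiles) and dimers ($1\times2$ or $2\times1$ tiles) such that no point is a corner of four distinct tiles. $T(r,c)$ denotes the total number of tatami tilings of the $r\times c$ grid (with any number of monomers), with the convention $T(r,0)=1$ (the empty tiling). *)

theory Defs
  imports "HOL-Computational_Algebra.Formal_Power_Series"
begin

definition grid :: "nat \<Rightarrow> nat \<Rightarrow> (nat \<times> nat) set" where
  "grid r c = {0..<r} \<times> {0..<c}"

definition is_tile :: "(nat \<times> nat) set \<Rightarrow> bool" where
  "is_tile t \<longleftrightarrow> (\<exists>a. t = {a}) \<or> (\<exists>i j. t = {(i,j),(i,Suc j)}) \<or> (\<exists>i j. t = {(i,j),(Suc i,j)})"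

definition tiling :: "nat \<Rightarrow> nat \<Rightarrow> (nat \<times> nat) set set \<Rightarrow> bool" where
  "tiling r c P \<longleftrightarrow> (\<forall>t\<in>P. is_tile t) \<and> (\<forall>t\<in>P. \<forall>u\<in>P. t \<noteq> u \<longrightarrow> t \<inter> u = {})
     \<and> \<Union>P = grid r c"

text \<open>Tatami condition: no interior lattice point (i,j) has its four surrounding cells
  (i-1,j-1),(i-1,j),(i,j-1),(i,j) lying in four distinct tiles (equivalently: no point is
  a corner of four distinct tiles; boundary points touch at most two cells).\<close>
definition tatami :: "nat \<Rightarrow> nat \<Rightarrow> (nat \<times> nat) set set \<Rightarrow> bool" where
  "tatami r c P \<longleftrightarrow> tiling r c P \<and>
     (\<forall>i j. 0 < i \<and> i < r \<and> 0 < j \<and> j < c \<longrightarrow>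
        \<not> (\<exists>t1\<in>P. \<exists>t2\<in>P. \<exists>t3\<in>P. \<exists>t4\<in>P. distinct [t1,t2,t3,t4] \<and>
              (i-1,j-1) \<in> t1 \<and> (i-1,j) \<in> t2 \<and> (i,j-1) \<in> t3 \<and> (i,j) \<in> t4))"

definition T :: "nat \<Rightarrow> nat \<Rightarrow> nat" where
  "T r c = card {P. tatami r c P}"

end

theory Submission
  imports Defs
begin

text \<open>
  On a board with two rows the tatami condition is local to the seams between consecutive
  columns: at each interior lattice point \<open>(1, j)\<close> some tile must cross one of the four
  edges meeting there. Removing the tiles that cover the right end of a board therefore expresses
  the number of tatami tilings of the \<open>2 \<times> c\<close> rectangle through the counts for the boards
  whose rows have lengths \<open>(c - 1, c)\<close> or \<open>(c, c - 1)\<close> and for rectangles ending in a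
  vertical dimer. Eliminating these auxiliary counts gives
  \<open>T(2, c + 4) = 2 T(2, c + 3) + 2 T(2, c + 1) - T(2, c)\<close>, which together with the
  initial values 1, 2, 6, 13 is the stated rational generating function.
\<close>


section \<open>Tilings of a set of cells\<close>

definition is_tiling :: "(nat \<times> nat) set \<Rightarrow> (nat \<times> nat) set set \<Rightarrow> bool" where
  "is_tiling A P \<longleftrightarrow> (\<forall>t\<in>P. is_tile t) \<and> (\<forall>t\<in>P. \<forall>u\<in>P. t \<noteq> u \<longrightarrow> t \<inter> u = {}) \<and> \<Union>P = A"

definition same_tile :: "(nat \<times> nat) set set \<Rightarrow> nat \<times> nat \<Rightarrow> nat \<times> nat \<Rightarrow> bool" where
  "same_tile P x y \<longleftrightarrow> (\<exists>t\<in>P. x \<in> t \<and> y \<in> t)"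

lemma is_tile_singleton [simp]: "is_tile {x}"
  by (auto simp: is_tile_def)

lemma is_tile_horizontal [simp]: "is_tile {(i, j), (i, Suc j)}"
  by (auto simp: is_tile_def)

lemma is_tile_vertical [simp]: "is_tile {(i, j), (Suc i, j)}"
  by (auto simp: is_tile_def)

lemma is_tile_nonempty: "is_tile t \<Longrightarrow> t \<noteq> {}"
  by (auto simp: is_tile_def)

lemma is_tile_cases:
  assumes "is_tile t" "(i, j) \<in> t"
  shows "t = {(i, j)} \<or> t = {(i, j), (i, Suc j)} \<or> (0 < j \<and> t = {(i, j - 1), (i, j)})
    \<or> t = {(i, j), (Suc i, j)} \<or> (0 < i \<and> t = {(i - 1, j), (i, j)})"
  using assms unfolding is_tile_def
proof (elim disjE exE)
  fix k l assume "t = {(k, l), (k, Suc l)}" "(i, j) \<in> t"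
  then consider "(i, j) = (k, l)" | "(i, j) = (k, Suc l)" by blast
  then show ?thesis by cases (use \<open>t = _\<close> in auto)
next
  fix k l assume "t = {(k, l), (Suc k, l)}" "(i, j) \<in> t"
  then consider "(i, j) = (k, l)" | "(i, j) = (Suc k, l)" by blast
  then show ?thesis by cases (use \<open>t = _\<close> in auto)
qed auto

lemma tile_row_change:
  assumes "is_tile t" "(0, j) \<in> t" "(1, k) \<in> t"
  shows "j = k"
  using is_tile_cases[OF assms(1,2)] assms(3) by (elim disjE) auto

lemma is_tiling_tile_unique:
  "is_tiling A P \<Longrightarrow> t \<in> P \<Longrightarrow> u \<in> P \<Longrightarrow> x \<in> t \<Longrightarrow> x \<in> u \<Longrightarrow> t = u"
  by (auto simp: is_tiling_def)

lemma is_tiling_tile_subset: "is_tiling A P \<Longrightarrow> t \<in> P \<Longrightarrow> t \<subseteq> A"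
  by (auto simp: is_tiling_def)

lemma is_tiling_tile_at:
  assumes "is_tiling A P" "x \<in> A"
  obtains t where "t \<in> P" "x \<in> t" "is_tile t" "t \<subseteq> A"
  using assms by (auto simp: is_tiling_def)

lemma finite_tilings: "finite A \<Longrightarrow> finite {P. is_tiling A P \<and> Q P}"
  by (rule finite_subset[of _ "Pow (Pow A)"]) (auto simp: is_tiling_def)

lemma same_tile_empty [simp]: "\<not> same_tile {} x y"
  by (simp add: same_tile_def)

lemma same_tile_insert [simp]: "same_tile (insert t P) x y \<longleftrightarrow> (x \<in> t \<and> y \<in> t) \<or> same_tile P x y"
  by (auto simp: same_tile_def)

lemma same_tile_Un: "same_tile (P \<union> K) x y \<longleftrightarrow> same_tile P x y \<or> same_tile K x y"
  by (auto simp: same_tile_def)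

lemma not_same_tile_outside:
  assumes "is_tiling A P"
  shows "x \<notin> A \<Longrightarrow> \<not> same_tile P x y" and "y \<notin> A \<Longrightarrow> \<not> same_tile P x y"
  using assms by (auto simp: same_tile_def is_tiling_def)

lemma same_tile_iff_eq:
  assumes "is_tiling A P" "t \<in> P" "u \<in> P" "x \<in> t" "y \<in> u"
  shows "same_tile P x y \<longleftrightarrow> t = u"
proof
  assume "same_tile P x y"
  then obtain s where "s \<in> P" "x \<in> s" "y \<in> s" by (auto simp: same_tile_def)
  then show "t = u" using is_tiling_tile_unique[OF assms(1)] assms(2-5) by metis
qed (use assms in \<open>auto simp: same_tile_def\<close>)

lemma same_tile_vertical_iff:
  assumes "is_tiling A P"
  shows "same_tile P (0, j) (1, j) \<longleftrightarrow> {(0, j), (1, j)} \<in> P"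
proof
  assume "same_tile P (0, j) (1, j)"
  then obtain t where t: "t \<in> P" "(0, j) \<in> t" "(1, j) \<in> t" by (auto simp: same_tile_def)
  then have "is_tile t" using assms by (auto simp: is_tiling_def)
  then have "t = {(0, j), (1, j)}" using is_tile_cases[OF _ t(2)] t(3) by auto
  then show "{(0, j), (1, j)} \<in> P" using t(1) by simp
qed (auto simp: same_tile_def)

lemma is_tiling_Un_iff:
  assumes K: "is_tiling E K" and disj: "E \<inter> B = {}"
  shows "is_tiling (B \<union> E) P \<and> K \<subseteq> P \<longleftrightarrow> K \<subseteq> P \<and> is_tiling B (P - K)"
proof safe
  assume P: "is_tiling (B \<union> E) P" and "K \<subseteq> P"
  have "t \<inter> E = {}" if "t \<in> P - K" for t
  proof (rule equals0I)
    fix x assume "x \<in> t \<inter> E"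
    then obtain k where "k \<in> K" "x \<in> k" using K by (auto simp: is_tiling_def)
    then show False
      using is_tiling_tile_unique[OF P] \<open>K \<subseteq> P\<close> that \<open>x \<in> t \<inter> E\<close> by blast
  qed
  moreover have "\<Union>K = E" using K by (simp add: is_tiling_def)
  ultimately have "\<Union>(P - K) = \<Union>P - E"
    using \<open>K \<subseteq> P\<close> by blast
  also have "\<dots> = B" using P disj by (auto simp: is_tiling_def)
  finally show "is_tiling B (P - K)"
    using P by (auto simp: is_tiling_def)
next
  assume "K \<subseteq> P" and P': "is_tiling B (P - K)"
  have in_B: "t \<subseteq> B" if "t \<in> P - K" for t using that P' by (auto simp: is_tiling_def)
  have in_E: "t \<subseteq> E" if "t \<in> K" for t using that K by (auto simp: is_tiling_def)
  have "t \<inter> u = {}" if "t \<in> P" "u \<in> P" "t \<noteq> u" for t u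
  proof (cases "t \<in> K"; cases "u \<in> K")
    assume "t \<in> K" "u \<in> K" then show ?thesis using K \<open>t \<noteq> u\<close> by (auto simp: is_tiling_def)
  next
    assume "t \<notin> K" "u \<notin> K" then show ?thesis using P' that by (auto simp: is_tiling_def)
  qed (use that in_B in_E disj in blast)+
  moreover have "\<Union>P = B \<union> E"
    using \<open>K \<subseteq> P\<close> P' K by (auto simp: is_tiling_def)
  ultimately show "is_tiling (B \<union> E) P"
    using \<open>K \<subseteq> P\<close> P' K by (auto simp: is_tiling_def)
qed

lemma card_tilings_extend:
  assumes tiles: "\<forall>t\<in>K. is_tile t" and disj_K: "\<forall>t\<in>K. \<forall>u\<in>K. t \<noteq> u \<longrightarrow> t \<inter> u = {}"
    and disj: "\<Union>K \<inter> B = {}" and A: "A = B \<union> \<Union>K"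
    and Q: "\<And>P. is_tiling B P \<Longrightarrow> Q (P \<union> K) \<longleftrightarrow> Q' P"
  shows "card {P. is_tiling A P \<and> K \<subseteq> P \<and> Q P} = card {P. is_tiling B P \<and> Q' P}"
proof -
  have K: "is_tiling (\<Union>K) K" using tiles disj_K by (simp add: is_tiling_def)
  have P_K: "P \<inter> K = {}" if "is_tiling B P" for P
    using that tiles disj is_tile_nonempty by (fastforce simp: is_tiling_def)
  have "{P. is_tiling A P \<and> K \<subseteq> P \<and> Q P} = (\<lambda>P. P \<union> K) ` {P. is_tiling B P \<and> Q' P}"
  proof (intro equalityI subsetI)
    fix P assume "P \<in> {P. is_tiling A P \<and> K \<subseteq> P \<and> Q P}"
    then have "K \<subseteq> P" "is_tiling B (P - K)" "Q ((P - K) \<union> K)"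
      using is_tiling_Un_iff[OF K disj] A by (auto simp: Un_absorb2)
    then show "P \<in> (\<lambda>P. P \<union> K) ` {P. is_tiling B P \<and> Q' P}"
      using Q[of "P - K"] by (auto simp: Un_absorb2 intro!: image_eqI[of _ _ "P - K"])
  next
    fix P assume "P \<in> (\<lambda>P. P \<union> K) ` {P. is_tiling B P \<and> Q' P}"
    then obtain P' where "P = P' \<union> K" "is_tiling B P'" "Q' P'" by auto
    moreover have "(P' \<union> K) - K = P'" using P_K[OF \<open>is_tiling B P'\<close>] by blast
    ultimately show "P \<in> {P. is_tiling A P \<and> K \<subseteq> P \<and> Q P}"
      using is_tiling_Un_iff[OF K disj, of P] A Q by auto
  qed
  moreover have "inj_on (\<lambda>P. P \<union> K) {P. is_tiling B P \<and> Q' P}"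
    using P_K by (auto intro!: inj_onI)
  ultimately show ?thesis by (simp add: card_image)
qed

lemma card_tilings_split:
  assumes "finite A" "finite Ks"
    and cover: "\<And>P. is_tiling A P \<Longrightarrow> Q P \<Longrightarrow> \<exists>K\<in>Ks. K \<subseteq> P"
    and conflict: "\<And>K K'. K \<in> Ks \<Longrightarrow> K' \<in> Ks \<Longrightarrow> K \<noteq> K' \<Longrightarrow> \<exists>t\<in>K. \<exists>u\<in>K'. t \<noteq> u \<and> t \<inter> u \<noteq> {}"
  shows "card {P. is_tiling A P \<and> Q P} = (\<Sum>K\<in>Ks. card {P. is_tiling A P \<and> K \<subseteq> P \<and> Q P})"
proof -
  have "{P. is_tiling A P \<and> Q P} = (\<Union>K\<in>Ks. {P. is_tiling A P \<and> K \<subseteq> P \<and> Q P})"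
    using cover by blast
  moreover have "{P. is_tiling A P \<and> K \<subseteq> P \<and> Q P} \<inter> {P. is_tiling A P \<and> K' \<subseteq> P \<and> Q P} = {}"
    if "K \<in> Ks" "K' \<in> Ks" "K \<noteq> K'" for K K'
    using conflict[OF that] is_tiling_tile_unique by blast
  ultimately show ?thesis
    using assms(1,2) by (simp add: card_UN_disjoint finite_tilings)
qed

section \<open>Boards with two rows\<close>

definition two_rows :: "nat \<Rightarrow> nat \<Rightarrow> (nat \<times> nat) set" where
  "two_rows a b = {(i, j). (i = 0 \<and> j < a) \<or> (i = 1 \<and> j < b)}"

text \<open>The lattice point \<open>(1, j)\<close> between columns \<open>j - 1\<close> and \<open>j\<close> is not a corner of four
  distinct tiles: one of the four edges meeting there lies inside a tile.\<close>

definition tatami_at :: "(nat \<times> nat) set set \<Rightarrow> nat \<Rightarrow> bool" where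
  "tatami_at P j \<longleftrightarrow> same_tile P (0, j - 1) (0, j) \<or> same_tile P (1, j - 1) (1, j)
     \<or> same_tile P (0, j - 1) (1, j - 1) \<or> same_tile P (0, j) (1, j)"

definition tatami_upto :: "nat \<Rightarrow> (nat \<times> nat) set set \<Rightarrow> bool" where
  "tatami_upto n P \<longleftrightarrow> (\<forall>j. 0 < j \<and> j < n \<longrightarrow> tatami_at P j)"

text \<open>On the \<open>2 \<times> c\<close> rectangle, \<open>n = c\<close> counts the tatami tilings and \<open>n = c + 1\<close> those
  whose last column is a vertical dimer (or \<open>c = 0\<close>).\<close>

definition tatami_count :: "nat \<Rightarrow> nat \<Rightarrow> nat \<Rightarrow> nat" where
  "tatami_count n a b = card {P. is_tiling (two_rows a b) P \<and> tatami_upto n P}"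

lemma mem_two_rows [simp]: "(i, j) \<in> two_rows a b \<longleftrightarrow> (i = 0 \<and> j < a) \<or> (i = 1 \<and> j < b)"
  by (simp add: two_rows_def)

lemma finite_two_rows: "finite (two_rows a b)"
  by (rule finite_subset[of _ "{0..1} \<times> {0..<max a b}"]) auto

lemma row_end_tile:
  assumes P: "is_tiling (two_rows a b) P" and "(i, c) \<in> two_rows a b" "(i, Suc c) \<notin> two_rows a b"
  shows "{(i, c)} \<in> P \<or> (0 < c \<and> {(i, c - 1), (i, c)} \<in> P) \<or> {(0, c), (1, c)} \<in> P"
proof -
  obtain t where t: "t \<in> P" "(i, c) \<in> t" "is_tile t" "t \<subseteq> two_rows a b"
    using is_tiling_tile_at[OF assms(1,2)] .
  have "i \<le> 1" using assms(2) by auto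
  then have "t = {(i, c)} \<or> (0 < c \<and> t = {(i, c - 1), (i, c)}) \<or> t = {(0, c), (1, c)}"
    using is_tile_cases[OF t(3,2)] t(4) assms(3) by (auto simp: le_Suc_eq)
  then show ?thesis using t(1) by blast
qed

lemma tatami_upto_Suc: "tatami_upto (Suc n) P \<longleftrightarrow> tatami_upto n P \<and> (0 < n \<longrightarrow> tatami_at P n)"
  by (auto simp: tatami_upto_def less_Suc_eq)

text \<open>When the two rows differ in length by at most one, each edge at a seam \<open>j < max a b\<close> has an
  endpoint on the board, so tiles outside the board cannot affect these seams.\<close>

lemma tatami_upto_Un_outside:
  assumes P: "is_tiling (two_rows a b) P" and disj: "\<Union>K \<inter> two_rows a b = {}"
    and "a \<le> Suc b" "b \<le> Suc a" "n \<le> max a b"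
  shows "tatami_upto n (P \<union> K) \<longleftrightarrow> tatami_upto n P"
proof -
  have not_K: "\<not> same_tile K x y" if "x \<in> two_rows a b \<or> y \<in> two_rows a b" for x y
    using that disj by (auto simp: same_tile_def)
  have "tatami_at (P \<union> K) j \<longleftrightarrow> tatami_at P j" if "0 < j" "j < n" for j
  proof -
    have "(0, j - 1) \<in> two_rows a b" "(1, j - 1) \<in> two_rows a b"
      "(0, j) \<in> two_rows a b \<or> (1, j) \<in> two_rows a b"
      using that assms(3-5) by auto
    then show ?thesis by (auto simp: tatami_at_def same_tile_Un not_K)
  qed
  then show ?thesis by (auto simp: tatami_upto_def)
qed

lemma tatami_upto_Un_square:
  assumes P: "is_tiling (two_rows c c) P"
    and K: "\<forall>t\<in>K. is_tile t" "\<Union>K \<inter> two_rows c c = {}" "{(0, c), (1, c)} \<notin> K"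
  shows "tatami_upto (Suc c) (P \<union> K) \<longleftrightarrow> tatami_upto (Suc c) P"
proof -
  have "tatami_upto c (P \<union> K) \<longleftrightarrow> tatami_upto c P"
    by (rule tatami_upto_Un_outside[OF P K(2)]) auto
  moreover have "tatami_at (P \<union> K) c \<longleftrightarrow> tatami_at P c" if "0 < c"
  proof -
    have "\<not> same_tile K (0, c) (1, c)"
    proof
      assume "same_tile K (0, c) (1, c)"
      then obtain t where "t \<in> K" "(0, c) \<in> t" "(1, c) \<in> t" by (auto simp: same_tile_def)
      then have "t = {(0, c), (1, c)}" using is_tile_cases[of t 0 c] K(1) by auto
      with \<open>t \<in> K\<close> K(3) show False by simp
    qed
    moreover have "\<not> same_tile K (i, c - 1) y" if "i \<le> 1" for i y
      using K(2) that \<open>0 < c\<close> by (auto simp: same_tile_def le_Suc_eq)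
    ultimately show ?thesis
      by (simp add: tatami_at_def same_tile_Un not_same_tile_outside[OF P])
  qed
  ultimately show ?thesis unfolding tatami_upto_Suc by blast
qed

section \<open>Removing the right end of a board\<close>

lemma card_square_vertical_end:
  "card {P. is_tiling (two_rows (Suc c) (Suc c)) P \<and> {{(0, c), (1, c)}} \<subseteq> P \<and> tatami_upto (Suc c) P}
     = tatami_count c c c"
  unfolding tatami_count_def
proof (rule card_tilings_extend)
  fix P assume P: "is_tiling (two_rows c c) P"
  have "tatami_upto c (P \<union> {{(0, c), (1, c)}}) \<longleftrightarrow> tatami_upto c P"
    by (rule tatami_upto_Un_outside[OF P]) auto
  then show "tatami_upto (Suc c) (P \<union> {{(0, c), (1, c)}}) \<longleftrightarrow> tatami_upto c P"
    unfolding tatami_upto_Suc by (simp add: tatami_at_def)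
qed auto

lemma card_square_monomer_end:
  "card {P. is_tiling (two_rows (Suc c) (Suc c)) P \<and> {{(0, c)}} \<subseteq> P \<and> tatami_upto (Suc c) P}
     = tatami_count (Suc c) c (Suc c)"
  unfolding tatami_count_def
proof (rule card_tilings_extend)
  fix P assume P: "is_tiling (two_rows c (Suc c)) P"
  show "tatami_upto (Suc c) (P \<union> {{(0, c)}}) \<longleftrightarrow> tatami_upto (Suc c) P"
    by (rule tatami_upto_Un_outside[OF P]) auto
qed auto

lemma card_square_horizontal_monomer_end:
  "card {P. is_tiling (two_rows (Suc (Suc d)) (Suc (Suc d))) P \<and> {{(0, d), (0, Suc d)}, {(1, Suc d)}} \<subseteq> P
      \<and> tatami_upto (Suc (Suc d)) P}
     = tatami_count (Suc d) d (Suc d)"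
  unfolding tatami_count_def
proof (rule card_tilings_extend)
  fix P assume P: "is_tiling (two_rows d (Suc d)) P"
  have "tatami_upto (Suc d) (P \<union> {{(0, d), (0, Suc d)}, {(1, Suc d)}}) \<longleftrightarrow> tatami_upto (Suc d) P"
    by (rule tatami_upto_Un_outside[OF P]) auto
  then show "tatami_upto (Suc (Suc d)) (P \<union> {{(0, d), (0, Suc d)}, {(1, Suc d)}}) \<longleftrightarrow> tatami_upto (Suc d) P"
    unfolding tatami_upto_Suc[of "Suc d"] by (simp add: tatami_at_def)
qed auto

lemma card_square_horizontal_end:
  "card {P. is_tiling (two_rows (Suc (Suc d)) (Suc (Suc d))) P \<and> {{(0, d), (0, Suc d)}, {(1, d), (1, Suc d)}} \<subseteq> P
      \<and> tatami_upto (Suc (Suc d)) P}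
     = tatami_count (Suc d) d d"
  unfolding tatami_count_def
proof (rule card_tilings_extend)
  fix P assume P: "is_tiling (two_rows d d) P"
  have "tatami_upto (Suc d) (P \<union> {{(0, d), (0, Suc d)}, {(1, d), (1, Suc d)}}) \<longleftrightarrow> tatami_upto (Suc d) P"
    by (rule tatami_upto_Un_square[OF P]) (auto simp: doubleton_eq_iff)
  then show "tatami_upto (Suc (Suc d)) (P \<union> {{(0, d), (0, Suc d)}, {(1, d), (1, Suc d)}})
      \<longleftrightarrow> tatami_upto (Suc d) P"
    unfolding tatami_upto_Suc[of "Suc d"] by (simp add: tatami_at_def)
qed auto

lemma card_lower_monomer_end:
  "card {P. is_tiling (two_rows c (Suc c)) P \<and> {{(1, c)}} \<subseteq> P \<and> tatami_upto (Suc c) P}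
     = tatami_count (Suc c) c c"
  unfolding tatami_count_def
proof (rule card_tilings_extend)
  fix P assume P: "is_tiling (two_rows c c) P"
  show "tatami_upto (Suc c) (P \<union> {{(1, c)}}) \<longleftrightarrow> tatami_upto (Suc c) P"
    by (rule tatami_upto_Un_square[OF P]) auto
qed auto

lemma card_lower_horizontal_end:
  "card {P. is_tiling (two_rows (Suc d) (Suc (Suc d))) P \<and> {{(1, d), (1, Suc d)}} \<subseteq> P
      \<and> tatami_upto (Suc (Suc d)) P}
     = tatami_count (Suc d) (Suc d) d"
  unfolding tatami_count_def
proof (rule card_tilings_extend)
  fix P assume P: "is_tiling (two_rows (Suc d) d) P"
  have "tatami_upto (Suc d) (P \<union> {{(1, d), (1, Suc d)}}) \<longleftrightarrow> tatami_upto (Suc d) P"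
    by (rule tatami_upto_Un_outside[OF P]) auto
  then show "tatami_upto (Suc (Suc d)) (P \<union> {{(1, d), (1, Suc d)}}) \<longleftrightarrow> tatami_upto (Suc d) P"
    unfolding tatami_upto_Suc[of "Suc d"] by (simp add: tatami_at_def)
qed auto

lemma card_upper_monomer_end:
  "card {P. is_tiling (two_rows (Suc c) c) P \<and> {{(0, c)}} \<subseteq> P \<and> tatami_upto (Suc c) P}
     = tatami_count (Suc c) c c"
  unfolding tatami_count_def
proof (rule card_tilings_extend)
  fix P assume P: "is_tiling (two_rows c c) P"
  show "tatami_upto (Suc c) (P \<union> {{(0, c)}}) \<longleftrightarrow> tatami_upto (Suc c) P"
    by (rule tatami_upto_Un_square[OF P]) auto
qed auto

lemma card_upper_horizontal_end:
  "card {P. is_tiling (two_rows (Suc (Suc d)) (Suc d)) P \<and> {{(0, d), (0, Suc d)}} \<subseteq> P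
      \<and> tatami_upto (Suc (Suc d)) P}
     = tatami_count (Suc d) d (Suc d)"
  unfolding tatami_count_def
proof (rule card_tilings_extend)
  fix P assume P: "is_tiling (two_rows d (Suc d)) P"
  have "tatami_upto (Suc d) (P \<union> {{(0, d), (0, Suc d)}}) \<longleftrightarrow> tatami_upto (Suc d) P"
    by (rule tatami_upto_Un_outside[OF P]) auto
  then show "tatami_upto (Suc (Suc d)) (P \<union> {{(0, d), (0, Suc d)}}) \<longleftrightarrow> tatami_upto (Suc d) P"
    unfolding tatami_upto_Suc[of "Suc d"] by (simp add: tatami_at_def)
qed auto

lemma tatami_count_square_Suc_Suc:
  "tatami_count (Suc (Suc d)) (Suc (Suc d)) (Suc (Suc d))
     = tatami_count (Suc d) (Suc d) (Suc d) + tatami_count (Suc (Suc d)) (Suc d) (Suc (Suc d))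
       + tatami_count (Suc d) d (Suc d) + tatami_count (Suc d) d d"
proof -
  let ?A = "two_rows (Suc (Suc d)) (Suc (Suc d))"
  let ?V = "{{(0, Suc d), (1, Suc d)}}" and ?M = "{{(0, Suc d)}}"
  let ?HM = "{{(0, d), (0, Suc d)}, {(1, Suc d)}}"
  let ?HH = "{{(0, d), (0, Suc d)}, {(1, d), (1, Suc d)}}"
  \<comment> \<open>Classify by the tile covering the top right cell and, when that is a horizontal dimer,
    also by the tile covering the bottom right cell.\<close>
  have "tatami_count (Suc (Suc d)) (Suc (Suc d)) (Suc (Suc d))
      = (\<Sum>K\<in>{?V, ?M, ?HM, ?HH}. card {P. is_tiling ?A P \<and> K \<subseteq> P \<and> tatami_upto (Suc (Suc d)) P})"
    unfolding tatami_count_def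
  proof (rule card_tilings_split)
    fix P assume P: "is_tiling ?A P"
    have "{(0, Suc d)} \<in> P \<or> {(0, d), (0, Suc d)} \<in> P \<or> {(0, Suc d), (1, Suc d)} \<in> P"
      using row_end_tile[OF P, of 0 "Suc d"] by simp
    moreover have "{(1, Suc d)} \<in> P \<or> {(1, d), (1, Suc d)} \<in> P \<or> {(0, Suc d), (1, Suc d)} \<in> P"
      using row_end_tile[OF P, of 1 "Suc d"] by simp
    moreover have "\<not> ({(0, d), (0, Suc d)} \<in> P \<and> {(0, Suc d), (1, Suc d)} \<in> P)"
      using is_tiling_tile_unique[OF P, of "{(0, d), (0, Suc d)}" "{(0, Suc d), (1, Suc d)}" "(0, Suc d)"]
      by auto
    ultimately show "\<exists>K\<in>{?V, ?M, ?HM, ?HH}. K \<subseteq> P" by auto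
  qed (auto simp: finite_two_rows doubleton_eq_iff)
  also have "\<dots> = tatami_count (Suc d) (Suc d) (Suc d) + tatami_count (Suc (Suc d)) (Suc d) (Suc (Suc d))
       + tatami_count (Suc d) d (Suc d) + tatami_count (Suc d) d d"
    using card_square_vertical_end[of "Suc d"] card_square_monomer_end[of "Suc d"]
      card_square_horizontal_monomer_end[of d] card_square_horizontal_end[of d]
    by (simp add: doubleton_eq_iff)
  finally show ?thesis .
qed

lemma tatami_count_square_one:
  "tatami_count 1 1 1 = tatami_count 0 0 0 + tatami_count 1 0 1"
proof -
  let ?A = "two_rows 1 1"
  have "tatami_count 1 1 1
      = (\<Sum>K\<in>{{{(0, 0), (1, 0)}}, {{(0, 0)}}}. card {P. is_tiling ?A P \<and> K \<subseteq> P \<and> tatami_upto 1 P})"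
    unfolding tatami_count_def
  proof (rule card_tilings_split)
    fix P assume P: "is_tiling ?A P"
    show "\<exists>K\<in>{{{(0, 0), (1, 0)}}, {{(0, 0)}}}. K \<subseteq> P"
      using row_end_tile[OF P, of 0 0] by auto
  qed (auto simp: finite_two_rows doubleton_eq_iff)
  also have "\<dots> = tatami_count 0 0 0 + tatami_count 1 0 1"
    using card_square_vertical_end[of 0] card_square_monomer_end[of 0] by simp
  finally show ?thesis .
qed

lemma tatami_count_lower_Suc:
  "tatami_count (Suc (Suc d)) (Suc d) (Suc (Suc d))
     = tatami_count (Suc (Suc d)) (Suc d) (Suc d) + tatami_count (Suc d) (Suc d) d"
proof -
  let ?A = "two_rows (Suc d) (Suc (Suc d))"
  have "tatami_count (Suc (Suc d)) (Suc d) (Suc (Suc d))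
      = (\<Sum>K\<in>{{{(1, Suc d)}}, {{(1, d), (1, Suc d)}}}.
           card {P. is_tiling ?A P \<and> K \<subseteq> P \<and> tatami_upto (Suc (Suc d)) P})"
    unfolding tatami_count_def
  proof (rule card_tilings_split)
    fix P assume P: "is_tiling ?A P"
    have "{(0, Suc d), (1, Suc d)} \<notin> P" using is_tiling_tile_subset[OF P, of "{(0, Suc d), (1, Suc d)}"] by auto
    then show "\<exists>K\<in>{{{(1, Suc d)}}, {{(1, d), (1, Suc d)}}}. K \<subseteq> P"
      using row_end_tile[OF P, of 1 "Suc d"] by auto
  qed (auto simp: finite_two_rows doubleton_eq_iff)
  also have "\<dots> = tatami_count (Suc (Suc d)) (Suc d) (Suc d) + tatami_count (Suc d) (Suc d) d"
    using card_lower_monomer_end[of "Suc d"] card_lower_horizontal_end[of d]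
    by (simp add: doubleton_eq_iff)
  finally show ?thesis .
qed

lemma tatami_count_upper_Suc:
  "tatami_count (Suc (Suc d)) (Suc (Suc d)) (Suc d)
     = tatami_count (Suc (Suc d)) (Suc d) (Suc d) + tatami_count (Suc d) d (Suc d)"
proof -
  let ?A = "two_rows (Suc (Suc d)) (Suc d)"
  have "tatami_count (Suc (Suc d)) (Suc (Suc d)) (Suc d)
      = (\<Sum>K\<in>{{{(0, Suc d)}}, {{(0, d), (0, Suc d)}}}.
           card {P. is_tiling ?A P \<and> K \<subseteq> P \<and> tatami_upto (Suc (Suc d)) P})"
    unfolding tatami_count_def
  proof (rule card_tilings_split)
    fix P assume P: "is_tiling ?A P"
    have "{(0, Suc d), (1, Suc d)} \<notin> P" using is_tiling_tile_subset[OF P, of "{(0, Suc d), (1, Suc d)}"] by auto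
    then show "\<exists>K\<in>{{{(0, Suc d)}}, {{(0, d), (0, Suc d)}}}. K \<subseteq> P"
      using row_end_tile[OF P, of 0 "Suc d"] by auto
  qed (auto simp: finite_two_rows doubleton_eq_iff)
  also have "\<dots> = tatami_count (Suc (Suc d)) (Suc d) (Suc d) + tatami_count (Suc d) d (Suc d)"
    using card_upper_monomer_end[of "Suc d"] card_upper_horizontal_end[of d]
    by (simp add: doubleton_eq_iff)
  finally show ?thesis .
qed

lemma tatami_count_lower_zero: "tatami_count 1 0 1 = tatami_count 1 0 0"
proof -
  have "{(0, 0), (1, 0)} \<notin> P" if "is_tiling (two_rows 0 1) P" for P
    using is_tiling_tile_subset[OF that, of "{(0, 0), (1, 0)}"] by auto
  then have "{P. is_tiling (two_rows 0 1) P \<and> tatami_upto 1 P}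
      = {P. is_tiling (two_rows 0 1) P \<and> {{(1, 0)}} \<subseteq> P \<and> tatami_upto 1 P}"
    using row_end_tile[of 0 1 _ 1 0] by auto
  then show ?thesis
    using card_lower_monomer_end[of 0] by (simp add: tatami_count_def)
qed

lemma tatami_count_upper_zero: "tatami_count 1 1 0 = tatami_count 1 0 0"
proof -
  have "{(0, 0), (1, 0)} \<notin> P" if "is_tiling (two_rows 1 0) P" for P
    using is_tiling_tile_subset[OF that, of "{(0, 0), (1, 0)}"] by auto
  then have "{P. is_tiling (two_rows 1 0) P \<and> tatami_upto 1 P}
      = {P. is_tiling (two_rows 1 0) P \<and> {{(0, 0)}} \<subseteq> P \<and> tatami_upto 1 P}"
    using row_end_tile[of 1 0 _ 0 0] by auto
  then show ?thesis
    using card_upper_monomer_end[of 0] by (simp add: tatami_count_def)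
qed

lemma tatami_count_closed_Suc: "tatami_count (Suc (Suc d)) (Suc d) (Suc d) = tatami_count d d d"
proof -
  have "tatami_upto (Suc (Suc d)) P \<longleftrightarrow> {{(0, d), (1, d)}} \<subseteq> P \<and> tatami_upto (Suc d) P"
    if P: "is_tiling (two_rows (Suc d) (Suc d)) P" for P
  proof -
    have "tatami_at P (Suc d) \<longleftrightarrow> same_tile P (0, d) (1, d)"
      by (simp add: tatami_at_def not_same_tile_outside[OF P])
    then show ?thesis
      unfolding tatami_upto_Suc[of "Suc d"] same_tile_vertical_iff[OF P] by auto
  qed
  then have "{P. is_tiling (two_rows (Suc d) (Suc d)) P \<and> tatami_upto (Suc (Suc d)) P}
      = {P. is_tiling (two_rows (Suc d) (Suc d)) P \<and> {{(0, d), (1, d)}} \<subseteq> P \<and> tatami_upto (Suc d) P}"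
    by blast
  then show ?thesis
    using card_square_vertical_end[of d] by (simp add: tatami_count_def)
qed

lemma tatami_count_empty: "n \<le> 1 \<Longrightarrow> tatami_count n 0 0 = 1"
proof -
  assume "n \<le> 1"
  then have "tatami_upto n {}" by (auto simp: tatami_upto_def)
  moreover have "is_tiling (two_rows 0 0) P \<longleftrightarrow> P = {}" for P
    using is_tile_nonempty by (auto simp: is_tiling_def two_rows_def)
  ultimately have "{P. is_tiling (two_rows 0 0) P \<and> tatami_upto n P} = {{}}" by auto
  then show ?thesis by (simp add: tatami_count_def)
qed

section \<open>Tatami tilings of the \<open>2 \<times> c\<close> rectangle\<close>

definition four_tiles_meet :: "(nat \<times> nat) set set \<Rightarrow> nat \<Rightarrow> nat \<Rightarrow> bool" where
  "four_tiles_meet P i j \<longleftrightarrow> (\<exists>t1\<in>P. \<exists>t2\<in>P. \<exists>t3\<in>P. \<exists>t4\<in>P. distinct [t1, t2, t3, t4] \<and>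
     (i - 1, j - 1) \<in> t1 \<and> (i - 1, j) \<in> t2 \<and> (i, j - 1) \<in> t3 \<and> (i, j) \<in> t4)"

lemma tatami_iff_four_tiles_meet:
  "tatami r c P \<longleftrightarrow> tiling r c P \<and> (\<forall>i j. 0 < i \<and> i < r \<and> 0 < j \<and> j < c \<longrightarrow> \<not> four_tiles_meet P i j)"
  unfolding tatami_def four_tiles_meet_def ..

lemma four_tiles_meet_iff_not_tatami_at:
  assumes P: "is_tiling (two_rows c c) P" and j: "0 < j" "j < c"
  shows "four_tiles_meet P 1 j \<longleftrightarrow> \<not> tatami_at P j"
proof -
  have cells: "(0, j - 1) \<in> two_rows c c" "(0, j) \<in> two_rows c c"
    "(1, j - 1) \<in> two_rows c c" "(1, j) \<in> two_rows c c"
    using j by auto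
  obtain t1 where t1: "t1 \<in> P" "(0, j - 1) \<in> t1" "is_tile t1"
    using is_tiling_tile_at[OF P cells(1)] by blast
  obtain t2 where t2: "t2 \<in> P" "(0, j) \<in> t2" "is_tile t2"
    using is_tiling_tile_at[OF P cells(2)] by blast
  obtain t3 where t3: "t3 \<in> P" "(1, j - 1) \<in> t3"
    using is_tiling_tile_at[OF P cells(3)] by blast
  obtain t4 where t4: "t4 \<in> P" "(1, j) \<in> t4"
    using is_tiling_tile_at[OF P cells(4)] by blast
  note unique = is_tiling_tile_unique[OF P]
  have ex_iff: "four_tiles_meet P 1 j \<longleftrightarrow> distinct [t1, t2, t3, t4]"
    unfolding four_tiles_meet_def diff_self_eq_0
  proof
    assume "\<exists>s1\<in>P. \<exists>s2\<in>P. \<exists>s3\<in>P. \<exists>s4\<in>P. distinct [s1, s2, s3, s4] \<and>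
            (0, j - 1) \<in> s1 \<and> (0, j) \<in> s2 \<and> (1, j - 1) \<in> s3 \<and> (1, j) \<in> s4"
    then show "distinct [t1, t2, t3, t4]"
    proof (elim bexE conjE)
      fix s1 s2 s3 s4
      assume s: "s1 \<in> P" "s2 \<in> P" "s3 \<in> P" "s4 \<in> P" "distinct [s1, s2, s3, s4]"
        "(0, j - 1) \<in> s1" "(0, j) \<in> s2" "(1, j - 1) \<in> s3" "(1, j) \<in> s4"
      have "s1 = t1" "s2 = t2" "s3 = t3" "s4 = t4"
        using unique[OF s(1) t1(1) s(6) t1(2)] unique[OF s(2) t2(1) s(7) t2(2)]
          unique[OF s(3) t3(1) s(8) t3(2)] unique[OF s(4) t4(1) s(9) t4(2)] by auto
      then show ?thesis using s(5) by simp
    qed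
  next
    assume "distinct [t1, t2, t3, t4]"
    then show "\<exists>s1\<in>P. \<exists>s2\<in>P. \<exists>s3\<in>P. \<exists>s4\<in>P. distinct [s1, s2, s3, s4] \<and>
            (0, j - 1) \<in> s1 \<and> (0, j) \<in> s2 \<and> (1, j - 1) \<in> s3 \<and> (1, j) \<in> s4"
      using t1 t2 t3 t4 by (intro bexI[of _ t1] bexI[of _ t2] bexI[of _ t3] bexI[of _ t4]) simp_all
  qed
  have at_iff: "tatami_at P j \<longleftrightarrow> t1 = t2 \<or> t3 = t4 \<or> t1 = t3 \<or> t2 = t4"
    unfolding tatami_at_def
    using same_tile_iff_eq[OF P t1(1) t2(1) t1(2) t2(2)] same_tile_iff_eq[OF P t3(1) t4(1) t3(2) t4(2)]
      same_tile_iff_eq[OF P t1(1) t3(1) t1(2) t3(2)] same_tile_iff_eq[OF P t2(1) t4(1) t2(2) t4(2)]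
    by simp
  have "t1 \<noteq> t4"
  proof
    assume "t1 = t4"
    then have "j - 1 = j" using tile_row_change[OF t1(3,2)] t4(2) by blast
    then show False using j by simp
  qed
  moreover have "t2 \<noteq> t3"
  proof
    assume "t2 = t3"
    then have "j = j - 1" using tile_row_change[OF t2(3,2)] t3(2) by blast
    then show False using j by simp
  qed
  ultimately show ?thesis
    unfolding ex_iff at_iff by auto
qed

lemma all_second_row:
  "(\<forall>i j. 0 < i \<and> i < (2::nat) \<and> Q j \<longrightarrow> R i j) \<longleftrightarrow> (\<forall>j. Q j \<longrightarrow> R 1 j)"
proof
  assume "\<forall>j. Q j \<longrightarrow> R 1 j"
  then show "\<forall>i j. 0 < i \<and> i < (2::nat) \<and> Q j \<longrightarrow> R i j"
    using less_2_cases by fastforce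
qed simp

lemma tatami_two_rows_iff: "tatami 2 c P \<longleftrightarrow> is_tiling (two_rows c c) P \<and> tatami_upto c P"
proof -
  have "grid 2 c = two_rows c c" by (auto simp: grid_def)
  then have "tiling 2 c P \<longleftrightarrow> is_tiling (two_rows c c) P"
    by (simp add: tiling_def is_tiling_def)
  moreover have "(\<forall>j. 0 < j \<and> j < c \<longrightarrow> \<not> four_tiles_meet P 1 j) \<longleftrightarrow> tatami_upto c P"
    if "is_tiling (two_rows c c) P"
    using four_tiles_meet_iff_not_tatami_at[OF that] by (auto simp: tatami_upto_def)
  ultimately show ?thesis
    unfolding tatami_iff_four_tiles_meet all_second_row by blast
qed

lemma T_two_eq_tatami_count: "T 2 c = tatami_count c c c"
  by (simp add: T_def tatami_count_def tatami_two_rows_iff)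

lemma tatami_square_recurrence:
  "tatami_count (n + 4) (n + 4) (n + 4) + tatami_count n n n
     = 2 * tatami_count (n + 3) (n + 3) (n + 3) + 2 * tatami_count (n + 1) (n + 1) (n + 1)"
proof -
  have "tatami_count (Suc (Suc (Suc (Suc n)))) (Suc (Suc (Suc (Suc n)))) (Suc (Suc (Suc (Suc n))))
      + tatami_count n n n
      = 2 * tatami_count (Suc (Suc (Suc n))) (Suc (Suc (Suc n))) (Suc (Suc (Suc n)))
      + 2 * tatami_count (Suc n) (Suc n) (Suc n)"
    using tatami_count_square_Suc_Suc[of "Suc (Suc n)"] tatami_count_square_Suc_Suc[of "Suc n"]
      tatami_count_lower_Suc[of "Suc (Suc n)"] tatami_count_upper_Suc[of "Suc n"]
      tatami_count_closed_Suc[of "Suc (Suc n)"] tatami_count_closed_Suc[of "Suc n"] tatami_count_closed_Suc[of n]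
    by linarith
  then show ?thesis by (simp add: eval_nat_numeral)
qed

lemma tatami_count_initial_values:
  "tatami_count 0 0 0 = 1" "tatami_count 1 1 1 = 2" "tatami_count 2 2 2 = 6" "tatami_count 3 3 3 = 13"
proof -
  have closed0: "tatami_count 1 0 0 = 1" and square0: "tatami_count 0 0 0 = 1"
    by (simp_all add: tatami_count_empty)
  have lower0: "tatami_count 1 0 1 = 1" and upper0: "tatami_count 1 1 0 = 1"
    using tatami_count_lower_zero tatami_count_upper_zero closed0 by simp_all
  have square1: "tatami_count 1 1 1 = 2"
    using tatami_count_square_one square0 lower0 by simp
  have closed1: "tatami_count 2 1 1 = 1"
    using tatami_count_closed_Suc[of 0] square0 by (simp add: numeral_2_eq_2)
  have closed2: "tatami_count 3 2 2 = 2"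
    using tatami_count_closed_Suc[of 1] square1 by (simp add: eval_nat_numeral)
  have lower1: "tatami_count 2 1 2 = 2"
    using tatami_count_lower_Suc[of 0] closed1 upper0 by (simp add: numeral_2_eq_2)
  have upper1: "tatami_count 2 2 1 = 2"
    using tatami_count_upper_Suc[of 0] closed1 lower0 by (simp add: numeral_2_eq_2)
  have lower2: "tatami_count 3 2 3 = 4"
    using tatami_count_lower_Suc[of 1] closed2 upper1 by (simp add: eval_nat_numeral)
  have square2: "tatami_count 2 2 2 = 6"
    using tatami_count_square_Suc_Suc[of 0] square1 lower1 lower0 closed0 by (simp add: numeral_2_eq_2)
  have square3: "tatami_count 3 3 3 = 13"
    using tatami_count_square_Suc_Suc[of 1] square2 lower2 lower1 closed1 by (simp add: eval_nat_numeral)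
  show "tatami_count 0 0 0 = 1" "tatami_count 1 1 1 = 2" "tatami_count 2 2 2 = 6" "tatami_count 3 3 3 = 13"
    by (fact square0 square1 square2 square3)+
qed

lemma fps_times_denominator_eq:
  fixes a :: "nat \<Rightarrow> real"
  assumes init: "a 0 = 1" "a 1 = 2" "a 2 = 6" "a 3 = 13"
    and rec: "\<And>n. a (n + 4) = 2 * a (n + 3) + 2 * a (n + 1) - a n"
  shows "Abs_fps a * (1 - 2 * fps_X - 2 * fps_X ^ 3 + fps_X ^ 4) = 1 + 2 * fps_X ^ 2 - fps_X ^ 3"
proof -
  let ?f = "Abs_fps a"
  have lhs: "?f * (1 - 2 * fps_X - 2 * fps_X ^ 3 + fps_X ^ 4)
      = ?f - fps_const 2 * (fps_X ^ 1 * ?f) - fps_const 2 * (fps_X ^ 3 * ?f) + fps_X ^ 4 * ?f"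
    by (simp add: numeral_fps_const algebra_simps)
  have rhs: "1 + 2 * fps_X ^ 2 - fps_X ^ 3 = 1 + fps_const 2 * fps_X ^ 2 - (fps_X ^ 3 :: real fps)"
    by (simp add: numeral_fps_const)
  show ?thesis
    unfolding lhs rhs
  proof (rule fps_ext)
    fix k :: nat
    have "k = 0 \<or> k = 1 \<or> k = 2 \<or> k = 3 \<or> (\<exists>n. k = n + 4)" by presburger
    then consider "k = 0" | "k = 1" | "k = 2" | "k = 3" | n where "k = n + 4" by blast
    then show "fps_nth (?f - fps_const 2 * (fps_X ^ 1 * ?f) - fps_const 2 * (fps_X ^ 3 * ?f) + fps_X ^ 4 * ?f) k
        = fps_nth (1 + fps_const 2 * fps_X ^ 2 - fps_X ^ 3) k"
    proof cases
      case 5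
      then show ?thesis
        using rec[of n] by (simp add: fps_X_power_mult_nth add.commute)
    qed (use init in \<open>simp_all add: fps_X_power_mult_nth\<close>)
  qed
qed

theorem lemma4:
  shows "(Abs_fps (\<lambda>c. of_nat (T 2 c)) :: real fps)
       = (1 + 2 * fps_X ^ 2 - fps_X ^ 3) / (1 - 2 * fps_X - 2 * fps_X ^ 3 + fps_X ^ 4)"
proof -
  let ?D = "1 - 2 * fps_X - 2 * fps_X ^ 3 + fps_X ^ 4 :: real fps"
  have "fps_nth ?D 0 \<noteq> 0" by (simp add: numeral_fps_const)
  then have "?D \<noteq> 0" by (metis fps_zero_nth)
  moreover have "Abs_fps (\<lambda>c. of_nat (T 2 c)) * ?D = 1 + 2 * fps_X ^ 2 - fps_X ^ 3"
  proof (rule fps_times_denominator_eq)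
    show "real (T 2 (n + 4)) = 2 * real (T 2 (n + 3)) + 2 * real (T 2 (n + 1)) - real (T 2 n)" for n
      using arg_cong[OF tatami_square_recurrence[of n], of real] by (simp add: T_two_eq_tatami_count)
  qed (use tatami_count_initial_values in \<open>simp_all add: T_two_eq_tatami_count\<close>)
  ultimately show ?thesis
    by (metis fps_divide_times_eq)
qed

end
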